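(* Let $B\subseteq A$ be a unital inclusion of unital $C^*$-algebras and let $p\in B$ be a projection. If $B\subseteq A$ is $C^*$-irreducible, then so is $pBp\subseteq pAp$. Conversely, if $p$ is full in $B$ and $pBp\subseteq pAp$ is $C^*$-irreducible, then $B\subseteq A$ is $C^*$-irreducible; moreover, in this case the assignment $D\mapsto pDp$ is a bijection from the set of intermediate $C^*$-algebras $B\subseteq D\subseteq A$ onto the set of intermediate $C^*$-algebras $pBp\subseteq C\subseteq pAp$.
   Context: A unital inclusion $B\subseteq A$ of $C^*$-algebras is $C^*$-irreducible if every intermediate $C^*$-algebra $B\subseteq D\subseteq A$ is simple. A projection $p\in B$ is full in $B$ if it is not contained in any proper closed two-sided ideal of $B$. *)

theory Defs
  imports Complex_Main
begin

class cstar_algebra = banach + real_normed_algebra_1 +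
  fixes scaleC :: "complex \<Rightarrow> 'a \<Rightarrow> 'a"
    and cstar :: "'a \<Rightarrow> 'a"
  assumes scaleC_scaleR: "scaleC (complex_of_real r) x = scaleR r x"
    and scaleC_add_right: "scaleC c (x + y) = scaleC c x + scaleC c y"
    and scaleC_add_left: "scaleC (c + d) x = scaleC c x + scaleC d x"
    and scaleC_scaleC: "scaleC c (scaleC d x) = scaleC (c * d) x"
    and scaleC_one: "scaleC 1 x = x"
    and scaleC_mult_left: "scaleC c x * y = scaleC c (x * y)"
    and scaleC_mult_right: "x * scaleC c y = scaleC c (x * y)"
    and norm_scaleC: "norm (scaleC c x) = cmod c * norm x"
    and cstar_cstar: "cstar (cstar x) = x"
    and cstar_add: "cstar (x + y) = cstar x + cstar y"
    and cstar_scaleC: "cstar (scaleC c x) = scaleC (cnj c) (cstar x)"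
    and cstar_mult: "cstar (x * y) = cstar y * cstar x"
    and cstar_identity: "norm (cstar x * x) = (norm x)\<^sup>2"

definition cstar_subalg :: "'a::cstar_algebra set \<Rightarrow> bool" where
  "cstar_subalg S \<longleftrightarrow> 0 \<in> S \<and>
     (\<forall>x\<in>S. \<forall>y\<in>S. x + y \<in> S \<and> x * y \<in> S) \<and>
     (\<forall>c. \<forall>x\<in>S. scaleC c x \<in> S) \<and>
     (\<forall>x\<in>S. cstar x \<in> S) \<and> closed S"

definition closed_ideal :: "'a::cstar_algebra set \<Rightarrow> 'a set \<Rightarrow> bool" where
  "closed_ideal I D \<longleftrightarrow> I \<subseteq> D \<and> 0 \<in> I \<and>
     (\<forall>x\<in>I. \<forall>y\<in>I. x + y \<in> I) \<and>
     (\<forall>c. \<forall>x\<in>I. scaleC c x \<in> I) \<and>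
     (\<forall>d\<in>D. \<forall>x\<in>I. d * x \<in> I \<and> x * d \<in> I) \<and> closed I"

definition simple_cstar :: "'a::cstar_algebra set \<Rightarrow> bool" where
  "simple_cstar D \<longleftrightarrow> D \<noteq> {0} \<and> (\<forall>I. closed_ideal I D \<longrightarrow> I = {0} \<or> I = D)"

definition intermediate :: "'a::cstar_algebra set \<Rightarrow> 'a set \<Rightarrow> 'a set set" where
  "intermediate B A = {D. cstar_subalg D \<and> B \<subseteq> D \<and> D \<subseteq> A}"

definition cstar_irreducible :: "'a::cstar_algebra set \<Rightarrow> 'a set \<Rightarrow> bool" where
  "cstar_irreducible B A \<longleftrightarrow> (\<forall>D \<in> intermediate B A. simple_cstar D)"

definition projection :: "'a::cstar_algebra \<Rightarrow> bool" where
  "projection p \<longleftrightarrow> p * p = p \<and> cstar p = p"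

definition full_in :: "'a::cstar_algebra \<Rightarrow> 'a set \<Rightarrow> bool" where
  "full_in p B \<longleftrightarrow> (\<forall>I. closed_ideal I B \<and> p \<in> I \<longrightarrow> I = B)"

definition corner :: "'a::cstar_algebra \<Rightarrow> 'a set \<Rightarrow> 'a set" where
  "corner p S = {p * x * p | x. x \<in> S}"

end

theory Submission
  imports Defs
begin

text \<open>Cutting down by \<open>p\<close> sends an intermediate algebra \<open>D\<close> to \<open>pDp\<close>. Conversely an
  intermediate algebra \<open>C\<close> of \<open>pBp \<subseteq> pAp\<close> is the corner of the closed span of
  \<open>B \<union> BCB\<close>, which is already a C*-algebra because \<open>c b c' = c (pbp) c'\<close>. If \<open>p\<close> is
  full, \<open>1\<close> lies in the closed span of \<open>BpB\<close>, so every \<open>d \<in> D\<close> lies in the closed span of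
  \<open>B (pDp) B\<close>; hence \<open>D\<close> is determined by \<open>pDp\<close> and \<open>D \<mapsto> pDp\<close> is bijective.

  Simplicity passes between \<open>D\<close> and \<open>pDp\<close>: an ideal \<open>J\<close> of \<open>pDp\<close> generates an ideal
  of \<open>D\<close> whose corner lies in \<open>J\<close>. An ideal \<open>J\<close> of \<open>D\<close> with \<open>pJp = 0\<close> satisfies \<open>Jp = 0\<close>
  by the C*-identity, so its annihilator is an ideal containing \<open>p\<close>; if \<open>p\<close> is full,
  the annihilator contains \<open>1\<close> and \<open>J = 0\<close>.\<close>

lemma scaleC_zero_right [simp]: "scaleC c (0::'a::cstar_algebra) = 0"
  by (metis add_cancel_right_right scaleC_add_right)

lemma cstar_scaleR: "cstar (scaleR r x) = scaleR r (cstar (x::'a::cstar_algebra))"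
  by (metis complex_cnj_complex_of_real cstar_scaleC scaleC_scaleR)

lemma norm_cstar [simp]: "norm (cstar (x::'a::cstar_algebra)) = norm x"
proof -
  have "norm y \<le> norm (cstar y)" for y :: 'a
  proof (cases "y = 0")
    case False
    have "(norm y)\<^sup>2 \<le> norm (cstar y) * norm y"
      using cstar_identity[of y] norm_mult_ineq[of "cstar y" y] by simp
    with False show ?thesis by (simp add: power2_eq_square)
  qed simp
  from this[of x] this[of "cstar x"] show ?thesis by (simp add: cstar_cstar)
qed

lemma bounded_linear_cstar: "bounded_linear (cstar :: 'a::cstar_algebra \<Rightarrow> 'a)"
  by (rule bounded_linear_intro[where K = 1]) (simp_all add: cstar_add cstar_scaleR)

lemma cstar_mult_self_eq_zero: "cstar x * x = 0 \<Longrightarrow> (x::'a::cstar_algebra) = 0"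
  using cstar_identity[of x] by simp

definition closed_csubspace :: "'a::cstar_algebra set \<Rightarrow> bool" where
  "closed_csubspace T \<longleftrightarrow> 0 \<in> T \<and> (\<forall>x\<in>T. \<forall>y\<in>T. x + y \<in> T) \<and>
     (\<forall>c. \<forall>x\<in>T. scaleC c x \<in> T) \<and> closed T"

definition closed_cspan :: "'a::cstar_algebra set \<Rightarrow> 'a set" where
  "closed_cspan S = closed_csubspace hull S"

lemma closed_csubspace_closed_cspan: "closed_csubspace (closed_cspan S)"
  unfolding closed_cspan_def by (rule hull_in) (auto simp: closed_csubspace_def)

lemma closed_cspan_superset: "S \<subseteq> closed_cspan S"
  unfolding closed_cspan_def by (rule hull_subset)

lemma closed_cspan_minimal: "S \<subseteq> T \<Longrightarrow> closed_csubspace T \<Longrightarrow> closed_cspan S \<subseteq> T"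
  unfolding closed_cspan_def by (rule hull_minimal)

lemma cstar_subalg_mult: "cstar_subalg D \<Longrightarrow> x \<in> D \<Longrightarrow> y \<in> D \<Longrightarrow> x * y \<in> D"
  by (simp add: cstar_subalg_def)

lemma closed_csubspace_if_cstar_subalg: "cstar_subalg D \<Longrightarrow> closed_csubspace D"
  by (simp add: closed_csubspace_def cstar_subalg_def)

lemma closed_csubspace_if_closed_ideal: "closed_ideal J D \<Longrightarrow> closed_csubspace J"
  by (simp add: closed_csubspace_def closed_ideal_def)

text \<open>The scalar condition also admits conjugate-linear maps such as the involution.\<close>
lemma closed_cspan_map_mem:
  assumes T: "closed_csubspace T" and f: "bounded_linear f"
    and semilinear: "\<And>c x. \<exists>c'. f (scaleC c x) = scaleC c' (f x)"
    and S: "\<And>y. y \<in> S \<Longrightarrow> f y \<in> T"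
    and x: "x \<in> closed_cspan S"
  shows "f x \<in> T"
proof (rule hull_induct[OF x[unfolded closed_cspan_def], where P = "\<lambda>x. f x \<in> T"])
  interpret bounded_linear f by (rule f)
  have "closed (f -` T)"
    using T by (intro closed_vimage continuous_on) (simp_all add: closed_csubspace_def)
  moreover have "f (scaleC c x) \<in> T" if "f x \<in> T" for c x
    using semilinear[of c x] that T by (auto simp: closed_csubspace_def)
  ultimately show "closed_csubspace {x. f x \<in> T}"
    using T by (simp add: closed_csubspace_def vimage_def add zero)
qed (rule S)

lemma closed_cspan_sandwich_mem:
  "closed_csubspace T \<Longrightarrow> (\<And>y. y \<in> S \<Longrightarrow> a * y * b \<in> T) \<Longrightarrow> x \<in> closed_cspan S
    \<Longrightarrow> a * x * b \<in> T"
  by (rule closed_cspan_map_mem[where f = "\<lambda>x. a * x * b"])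
    (auto intro: bounded_linear_compose[OF bounded_linear_mult_left bounded_linear_mult_right]
      simp: scaleC_mult_left scaleC_mult_right)

lemma closed_cspan_cstar_mem:
  "closed_csubspace T \<Longrightarrow> (\<And>y. y \<in> S \<Longrightarrow> cstar y \<in> T) \<Longrightarrow> x \<in> closed_cspan S
    \<Longrightarrow> cstar x \<in> T"
  by (rule closed_cspan_map_mem[where f = cstar]) (auto intro: bounded_linear_cstar simp: cstar_scaleC)

lemma cstar_subalg_closed_cspan:
  assumes mult: "\<And>x y. x \<in> S \<Longrightarrow> y \<in> S \<Longrightarrow> x * y \<in> S"
    and star: "\<And>x. x \<in> S \<Longrightarrow> cstar x \<in> S"
  shows "cstar_subalg (closed_cspan S)"
proof -
  let ?H = "closed_cspan S"
  have H: "closed_csubspace ?H" by (rule closed_csubspace_closed_cspan)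
  have "x * y \<in> ?H" if "x \<in> S" "y \<in> ?H" for x y
    using closed_cspan_sandwich_mem[OF H _ \<open>y \<in> ?H\<close>, of x 1] mult[OF \<open>x \<in> S\<close>]
      closed_cspan_superset by auto
  then have "x * y \<in> ?H" if "x \<in> ?H" "y \<in> ?H" for x y
    using closed_cspan_sandwich_mem[OF H _ \<open>x \<in> ?H\<close>, of 1 y] \<open>y \<in> ?H\<close> by auto
  moreover have "cstar x \<in> ?H" if "x \<in> ?H" for x
    using closed_cspan_cstar_mem[OF H _ that] star closed_cspan_superset by auto
  ultimately show ?thesis
    using H by (simp add: cstar_subalg_def closed_csubspace_def)
qed

lemma projection_mult_idem [simp]:
  "projection p \<Longrightarrow> p * p = p"
  "projection p \<Longrightarrow> p * (p * x) = p * x"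
  by (simp_all add: projection_def mult.assoc[symmetric])

lemma corner_memI: "x \<in> S \<Longrightarrow> p * x * p \<in> corner p S"
  by (auto simp: corner_def)

lemma corner_mono: "S \<subseteq> T \<Longrightarrow> corner p S \<subseteq> corner p T"
  by (auto simp: corner_def)

lemma corner_fixed:
  assumes "projection p" and "x \<in> corner p S"
  shows "p * x * p = x" and "p * x = x" and "x * p = x"
  using assms by (auto simp: corner_def mult.assoc)

lemma corner_subset: "cstar_subalg D \<Longrightarrow> p \<in> D \<Longrightarrow> corner p D \<subseteq> D"
  by (auto simp: corner_def cstar_subalg_def)

lemma corner_eq_fixed_points:
  assumes "projection p" and "\<And>x. x \<in> S \<Longrightarrow> p * x * p \<in> S"
  shows "corner p S = {x \<in> S. p * x * p = x}"
proof
  show "corner p S \<subseteq> {x \<in> S. p * x * p = x}"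
  proof
    fix x assume "x \<in> corner p S"
    then obtain y where "y \<in> S" "x = p * y * p"
      by (auto simp: corner_def)
    with assms corner_fixed[OF assms(1) \<open>x \<in> corner p S\<close>] show "x \<in> {x \<in> S. p * x * p = x}"
      by simp
  qed
  show "{x \<in> S. p * x * p = x} \<subseteq> corner p S"
    using corner_memI[of _ S p] by force
qed

lemma closed_corner:
  assumes "projection p" and "\<And>x. x \<in> S \<Longrightarrow> p * x * p \<in> S" and "closed S"
  shows "closed (corner p S)"
proof -
  have "closed {x. p * x * p = x}"
    by (intro closed_Collect_eq continuous_intros)
  with \<open>closed S\<close> show ?thesis
    by (simp add: corner_eq_fixed_points[OF assms(1,2)] Collect_conj_eq closed_Int)
qed

lemma cstar_subalg_corner:
  assumes D: "cstar_subalg D" and "p \<in> D" and p: "projection p"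
  shows "cstar_subalg (corner p D)"
proof -
  have pxp: "p * x * p \<in> D" if "x \<in> D" for x
    using D \<open>p \<in> D\<close> that by (simp add: cstar_subalg_def)
  have "closed (corner p D)"
    using D by (intro closed_corner[OF p pxp]) (auto simp: cstar_subalg_def)
  moreover have "0 \<in> corner p D"
    using corner_memI[of 0 D p] D by (simp add: cstar_subalg_def)
  moreover have "u + v \<in> corner p D" "u * v \<in> corner p D" "scaleC c u \<in> corner p D"
    "cstar u \<in> corner p D"
    if uv_mem: "u \<in> corner p D" "v \<in> corner p D" for u v c
  proof -
    obtain x y where "x \<in> D" "y \<in> D" and uv: "u = p * x * p" "v = p * y * p"
      using uv_mem by (auto simp: corner_def)
    then have "x + y \<in> D" "x * p * y \<in> D" "scaleC c x \<in> D" "cstar x \<in> D"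
      using D \<open>p \<in> D\<close> by (simp_all add: cstar_subalg_def)
    moreover have "u + v = p * (x + y) * p" "u * v = p * (x * p * y) * p"
      "scaleC c u = p * scaleC c x * p" "cstar u = p * cstar x * p"
      using p by (simp_all add: uv distrib_left distrib_right mult.assoc scaleC_mult_left
          scaleC_mult_right cstar_mult projection_def)
    ultimately show "u + v \<in> corner p D" "u * v \<in> corner p D" "scaleC c u \<in> corner p D"
      "cstar u \<in> corner p D"
      by (simp_all add: corner_memI)
  qed
  ultimately show ?thesis
    by (simp add: cstar_subalg_def)
qed

definition ideal_span :: "'a::cstar_algebra set \<Rightarrow> 'a set \<Rightarrow> 'a set" where
  "ideal_span D J = closed_cspan {d * j * e | d j e. d \<in> D \<and> j \<in> J \<and> e \<in> D}"

lemma closed_ideal_ideal_span: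
  assumes D: "cstar_subalg D" and "J \<subseteq> D"
  shows "closed_ideal (ideal_span D J) D"
proof -
  let ?G = "{d * j * e | d j e. d \<in> D \<and> j \<in> J \<and> e \<in> D}"
  have H: "closed_csubspace (ideal_span D J)"
    unfolding ideal_span_def by (rule closed_csubspace_closed_cspan)
  have G: "?G \<subseteq> ideal_span D J"
    unfolding ideal_span_def by (rule closed_cspan_superset)
  have "?G \<subseteq> D"
    using D \<open>J \<subseteq> D\<close> by (auto simp: cstar_subalg_def)
  then have "ideal_span D J \<subseteq> D"
    unfolding ideal_span_def using D by (intro closed_cspan_minimal closed_csubspace_if_cstar_subalg)
  moreover have sandwich: "a * x * b \<in> ideal_span D J"
    if a: "a \<in> insert 1 D" and b: "b \<in> insert 1 D" and x: "x \<in> ideal_span D J" for a b x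
  proof (rule closed_cspan_sandwich_mem[OF H _ x[unfolded ideal_span_def]])
    fix y assume "y \<in> ?G"
    then obtain d j e where "y = d * j * e" "d \<in> D" "j \<in> J" "e \<in> D"
      by blast
    moreover have "a * d \<in> D" "e * b \<in> D"
      using D a b \<open>d \<in> D\<close> \<open>e \<in> D\<close> by (auto simp: cstar_subalg_def)
    moreover have "a * y * b = (a * d) * j * (e * b)"
      using \<open>y = d * j * e\<close> by (simp add: mult.assoc)
    ultimately have "a * y * b \<in> ?G"
      by blast
    with G show "a * y * b \<in> ideal_span D J" ..
  qed
  ultimately show ?thesis
    using H sandwich[of _ 1] sandwich[of 1] by (simp add: closed_ideal_def closed_csubspace_def)
qed

lemma ideal_span_superset: "1 \<in> D \<Longrightarrow> J \<subseteq> ideal_span D J"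
  unfolding ideal_span_def using closed_cspan_superset by force

lemma ideal_span_full:
  assumes "cstar_subalg D" and "1 \<in> D" and "p \<in> D" and "full_in p D"
  shows "ideal_span D {p} = D"
  using assms closed_ideal_ideal_span ideal_span_superset unfolding full_in_def by blast

lemma full_in_mono:
  assumes B: "cstar_subalg B" and "1 \<in> B" and "p \<in> B" and "B \<subseteq> D"
    and full: "full_in p B"
  shows "full_in p D"
  unfolding full_in_def
proof (intro allI impI)
  fix I assume I: "closed_ideal I D \<and> p \<in> I"
  have "closed B"
    using B by (simp add: cstar_subalg_def)
  with I have "closed_ideal (I \<inter> B) B"
    using B \<open>B \<subseteq> D\<close> by (auto simp: closed_ideal_def cstar_subalg_def)
  then have "1 \<in> I"
    using full \<open>1 \<in> B\<close> \<open>p \<in> B\<close> I unfolding full_in_def by blast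
  then have "d * 1 \<in> I" if "d \<in> D" for d
    using I that unfolding closed_ideal_def by blast
  with I show "I = D"
    by (auto simp: closed_ideal_def)
qed

lemma closed_ideal_annihilator:
  assumes D: "cstar_subalg D" and J: "closed_ideal J D"
  shows "closed_ideal {z \<in> D. \<forall>x\<in>J. x * z = 0} D"
proof -
  have "{z \<in> D. \<forall>x\<in>J. x * z = 0} = D \<inter> (\<Inter>x\<in>J. {z. x * z = 0})"
    by auto
  moreover have "closed {z. x * z = 0}" for x :: 'a
    by (intro closed_Collect_eq continuous_intros)
  ultimately have "closed {z \<in> D. \<forall>x\<in>J. x * z = 0}"
    using D by (auto simp: cstar_subalg_def intro!: closed_Int closed_INT)
  moreover have "x * (d * z) = 0" if "d \<in> D" "x \<in> J" "\<forall>x\<in>J. x * z = 0" for d x z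
    using J that by (metis closed_ideal_def mult.assoc)
  ultimately show ?thesis
    using D J by (auto simp: closed_ideal_def cstar_subalg_def distrib_left scaleC_mult_right
        mult.assoc[symmetric])
qed

lemma closed_ideal_corner:
  assumes D: "cstar_subalg D" and "p \<in> D" and p: "projection p" and J: "closed_ideal J D"
  shows "closed_ideal (corner p J) (corner p D)"
proof -
  have pxp: "p * x * p \<in> J" if "x \<in> J" for x
    using J \<open>p \<in> D\<close> that by (simp add: closed_ideal_def)
  have "closed (corner p J)"
    using J by (intro closed_corner[OF p pxp]) (auto simp: closed_ideal_def)
  moreover have "corner p J \<subseteq> corner p D"
    using J by (intro corner_mono) (simp add: closed_ideal_def)
  moreover have "0 \<in> corner p J"
    using corner_memI[of 0 J p] J by (simp add: closed_ideal_def)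
  moreover have "u + v \<in> corner p J" if uv: "u \<in> corner p J" "v \<in> corner p J" for u v
  proof -
    obtain x y where "x \<in> J" "y \<in> J" "u = p * x * p" "v = p * y * p"
      using uv by (auto simp: corner_def)
    moreover have "p * x * p + p * y * p = p * (x + y) * p"
      by (simp add: distrib_left distrib_right)
    ultimately show ?thesis
      using J by (simp add: closed_ideal_def corner_memI)
  qed
  moreover have "scaleC c u \<in> corner p J" if u: "u \<in> corner p J" for u c
  proof -
    obtain x where "x \<in> J" "u = p * x * p"
      using u by (auto simp: corner_def)
    moreover have "scaleC c (p * x * p) = p * scaleC c x * p"
      by (simp add: scaleC_mult_left scaleC_mult_right)
    ultimately show ?thesis
      using J by (simp add: closed_ideal_def corner_memI)
  qed
  moreover have "w * u \<in> corner p J \<and> u * w \<in> corner p J"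
    if wu: "w \<in> corner p D" "u \<in> corner p J" for u w
  proof -
    obtain x d where "x \<in> J" "d \<in> D" and uw: "u = p * x * p" "w = p * d * p"
      using wu by (auto simp: corner_def)
    then have "d * p * x \<in> J" "x * p * d \<in> J"
      using J D \<open>p \<in> D\<close> by (simp_all add: closed_ideal_def cstar_subalg_def)
    moreover have "w * u = p * (d * p * x) * p" "u * w = p * (x * p * d) * p"
      using p by (simp_all add: uw mult.assoc)
    ultimately show ?thesis
      by (simp add: corner_memI)
  qed
  ultimately show ?thesis
    by (simp add: closed_ideal_def)
qed

lemma corner_ideal_span_subset:
  assumes p: "projection p" and J: "closed_ideal J (corner p D)"
  shows "corner p (ideal_span D J) \<subseteq> J"
proof
  fix u assume "u \<in> corner p (ideal_span D J)"
  then obtain x where u: "u = p * x * p" and x: "x \<in> ideal_span D J"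
    by (auto simp: corner_def)
  show "u \<in> J"
    unfolding u
  proof (rule closed_cspan_sandwich_mem[OF closed_csubspace_if_closed_ideal[OF J] _
        x[unfolded ideal_span_def]])
    fix y assume "y \<in> {d * j * e | d j e. d \<in> D \<and> j \<in> J \<and> e \<in> D}"
    then obtain d j e where "y = d * j * e" "d \<in> D" "j \<in> J" "e \<in> D"
      by blast
    moreover from \<open>j \<in> J\<close> obtain k where "j = p * k * p"
      using J by (auto simp: closed_ideal_def corner_def)
    ultimately have "p * y * p = (p * d * p) * j * (p * e * p)"
      using p by (simp add: mult.assoc)
    moreover have "p * d * p \<in> corner p D" "p * e * p \<in> corner p D"
      using \<open>d \<in> D\<close> \<open>e \<in> D\<close> by (simp_all add: corner_memI)
    ultimately show "p * y * p \<in> J"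
      using J \<open>j \<in> J\<close> by (simp add: closed_ideal_def)
  qed
qed

lemma simple_corner:
  assumes D: "cstar_subalg D" and "1 \<in> D" and "p \<in> D" and p: "projection p" and "p \<noteq> 0"
    and simple: "simple_cstar D"
  shows "simple_cstar (corner p D)"
  unfolding simple_cstar_def
proof (intro conjI allI impI)
  have "p \<in> corner p D"
    using corner_memI[OF \<open>1 \<in> D\<close>, of p] p by simp
  with \<open>p \<noteq> 0\<close> show "corner p D \<noteq> {0}"
    by blast
  fix J assume J: "closed_ideal J (corner p D)"
  then have "J \<subseteq> D"
    using corner_subset[OF D \<open>p \<in> D\<close>] by (auto simp: closed_ideal_def)
  then have "ideal_span D J = {0} \<or> ideal_span D J = D"
    using simple closed_ideal_ideal_span[OF D] by (simp add: simple_cstar_def)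
  then show "J = {0} \<or> J = corner p D"
  proof
    assume "ideal_span D J = {0}"
    then show ?thesis
      using ideal_span_superset[OF \<open>1 \<in> D\<close>, of J] J by (auto simp: closed_ideal_def)
  next
    assume "ideal_span D J = D"
    then have "p \<in> J"
      using corner_ideal_span_subset[OF p J] corner_memI[OF \<open>p \<in> D\<close>, of p] p by auto
    then have "y \<in> J" if "y \<in> corner p D" for y
      using J that corner_fixed(3)[OF p that] unfolding closed_ideal_def by metis
    with J show ?thesis
      by (auto simp: closed_ideal_def)
  qed
qed

lemma simple_if_simple_corner:
  assumes D: "cstar_subalg D" and "1 \<in> D" and "p \<in> D" and p: "projection p"
    and full: "full_in p D" and simple: "simple_cstar (corner p D)"
  shows "simple_cstar D"
  unfolding simple_cstar_def
proof (intro conjI allI impI)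
  show "D \<noteq> {0}"
    using \<open>1 \<in> D\<close> by auto
  fix J assume J: "closed_ideal J D"
  have "corner p J = {0} \<or> corner p J = corner p D"
    using simple closed_ideal_corner[OF D \<open>p \<in> D\<close> p J] by (simp add: simple_cstar_def)
  then show "J = {0} \<or> J = D"
  proof
    assume "corner p J = corner p D"
    then have "p * 1 * p \<in> corner p J"
      using corner_memI[OF \<open>1 \<in> D\<close>] by simp
    then obtain x where "x \<in> J" "p = p * x * p"
      using p by (auto simp: corner_def)
    then have "p \<in> J"
      using J \<open>p \<in> D\<close> unfolding closed_ideal_def by metis
    with full J show ?thesis
      by (simp add: full_in_def)
  next
    assume zero_corner: "corner p J = {0}"
    have "x * p = 0" if "x \<in> J" for x
    proof (rule cstar_mult_self_eq_zero)
      have "cstar x * x \<in> J"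
        using J D that by (auto simp: closed_ideal_def cstar_subalg_def)
      then have "p * (cstar x * x) * p = 0"
        using zero_corner corner_memI by blast
      then show "cstar (x * p) * (x * p) = 0"
        using p by (simp add: cstar_mult projection_def mult.assoc)
    qed
    then have "{z \<in> D. \<forall>x\<in>J. x * z = 0} = D"
      using full closed_ideal_annihilator[OF D J] \<open>p \<in> D\<close> by (simp add: full_in_def)
    then have "\<forall>x\<in>J. x * 1 = 0"
      using \<open>1 \<in> D\<close> by blast
    with J show ?thesis
      by (auto simp: closed_ideal_def)
  qed
qed

lemma corner_intermediate:
  assumes "D \<in> intermediate B A" and "p \<in> B" and "projection p"
  shows "corner p D \<in> intermediate (corner p B) (corner p A)"
proof -
  have "cstar_subalg D" "B \<subseteq> D" "D \<subseteq> A"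
    using assms(1) by (simp_all add: intermediate_def)
  with assms(2,3) show ?thesis
    using cstar_subalg_corner[of D p] corner_mono[of B D p] corner_mono[of D A p]
    by (auto simp: intermediate_def)
qed

definition corner_extension :: "'a::cstar_algebra set \<Rightarrow> 'a set \<Rightarrow> 'a set" where
  "corner_extension B C = closed_cspan (B \<union> {b * c * b' | b c b'. b \<in> B \<and> c \<in> C \<and> b' \<in> B})"

lemma corner_extension_generators_mult:
  assumes B: "cstar_subalg B" and p: "projection p"
    and C: "C \<in> intermediate (corner p B) (corner p A)"
    and x: "x \<in> B \<union> {b * c * b' | b c b'. b \<in> B \<and> c \<in> C \<and> b' \<in> B}"
    and y: "y \<in> B \<union> {b * c * b' | b c b'. b \<in> B \<and> c \<in> C \<and> b' \<in> B}"
  shows "x * y \<in> B \<union> {b * c * b' | b c b'. b \<in> B \<and> c \<in> C \<and> b' \<in> B}"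
proof -
  let ?G = "{b * c * b' | b c b'. b \<in> B \<and> c \<in> C \<and> b' \<in> B}"
  have BB: "b * b' \<in> B" if "b \<in> B" "b' \<in> B" for b b'
    using B that by (simp add: cstar_subalg_def)
  have CBC: "c * b * c' \<in> C" if "c \<in> C" "b \<in> B" "c' \<in> C" for c b c'
  proof -
    have "c \<in> corner p A" "c' \<in> corner p A"
      using C that by (auto simp: intermediate_def)
    then have "c * p = c" "p * c' = c'"
      using corner_fixed[OF p] by blast+
    moreover have "c * (p * b * p) * c' = (c * p) * b * (p * c')"
      by (simp add: mult.assoc)
    ultimately have "c * b * c' = c * (p * b * p) * c'"
      by simp
    moreover have "p * b * p \<in> C"
      using C corner_memI[OF \<open>b \<in> B\<close>, of p] by (auto simp: intermediate_def)
    ultimately show ?thesis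
      using C that by (simp add: intermediate_def cstar_subalg_def)
  qed
  consider "x \<in> B" "y \<in> B"
    | b c b' where "x \<in> B" "y = b * c * b'" "b \<in> B" "c \<in> C" "b' \<in> B"
    | b c b' where "x = b * c * b'" "b \<in> B" "c \<in> C" "b' \<in> B" "y \<in> B"
    | b1 c b2 b3 c' b4 where "x = b1 * c * b2" "y = b3 * c' * b4"
        "b1 \<in> B" "c \<in> C" "b2 \<in> B" "b3 \<in> B" "c' \<in> C" "b4 \<in> B"
    using x y by blast
  then show ?thesis
  proof cases
    case 1
    then show ?thesis
      by (simp add: BB)
  next
    case (2 b c b')
    then have "x * y = (x * b) * c * b'" "x * b \<in> B"
      by (simp_all add: BB mult.assoc)
    with 2 show ?thesis
      by blast
  next
    case (3 b c b')
    then have "x * y = b * c * (b' * y)" "b' * y \<in> B"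
      by (simp_all add: BB mult.assoc)
    with 3 show ?thesis
      by blast
  next
    case (4 b1 c b2 b3 c' b4)
    then have "x * y = b1 * (c * (b2 * b3) * c') * b4"
      by (simp add: mult.assoc)
    moreover have "c * (b2 * b3) * c' \<in> C"
      using 4 by (simp add: BB CBC)
    ultimately show ?thesis
      using 4 by blast
  qed
qed

lemma corner_extension_intermediate:
  assumes A: "cstar_subalg A" and B: "cstar_subalg B" and "B \<subseteq> A" and "p \<in> B"
    and p: "projection p" and C: "C \<in> intermediate (corner p B) (corner p A)"
  shows "corner_extension B C \<in> intermediate B A"
proof -
  let ?G = "{b * c * b' | b c b'. b \<in> B \<and> c \<in> C \<and> b' \<in> B}"
  have "cstar z \<in> B \<union> ?G" if z: "z \<in> B \<union> ?G" for z
  proof (cases "z \<in> B")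
    case False
    with z obtain b c b' where "z = b * c * b'" "b \<in> B" "c \<in> C" "b' \<in> B"
      by blast
    moreover have "cstar z = cstar b' * cstar c * cstar b"
      using \<open>z = b * c * b'\<close> by (simp add: cstar_mult mult.assoc)
    moreover have "cstar b' \<in> B" "cstar c \<in> C" "cstar b \<in> B"
      using B C \<open>b \<in> B\<close> \<open>c \<in> C\<close> \<open>b' \<in> B\<close> by (simp_all add: intermediate_def cstar_subalg_def)
    ultimately show ?thesis
      by blast
  qed (use B in \<open>simp add: cstar_subalg_def\<close>)
  then have "cstar_subalg (corner_extension B C)"
    unfolding corner_extension_def
    using corner_extension_generators_mult[OF B p C]
    by (intro cstar_subalg_closed_cspan)
  moreover have "B \<subseteq> corner_extension B C"
    unfolding corner_extension_def using closed_cspan_superset by blast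
  moreover have "C \<subseteq> A"
    using C corner_subset[OF A, of p] \<open>B \<subseteq> A\<close> \<open>p \<in> B\<close> by (auto simp: intermediate_def)
  then have "b * c * b' \<in> A" if "b \<in> B" "c \<in> C" "b' \<in> B" for b c b'
    using A \<open>C \<subseteq> A\<close> \<open>B \<subseteq> A\<close> that by (blast intro: cstar_subalg_mult)
  then have "B \<union> ?G \<subseteq> A"
    using \<open>B \<subseteq> A\<close> by blast
  then have "corner_extension B C \<subseteq> A"
    unfolding corner_extension_def
    using A by (intro closed_cspan_minimal closed_csubspace_if_cstar_subalg)
  ultimately show ?thesis
    by (simp add: intermediate_def)
qed

lemma corner_corner_extension:
  assumes "1 \<in> B" and p: "projection p" and C: "C \<in> intermediate (corner p B) (corner p A)"
  shows "corner p (corner_extension B C) = C"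
proof
  have C_sub: "cstar_subalg C" "corner p B \<subseteq> C" "C \<subseteq> corner p A"
    using C by (simp_all add: intermediate_def)
  show "corner p (corner_extension B C) \<subseteq> C"
  proof
    fix u assume "u \<in> corner p (corner_extension B C)"
    then obtain x where u: "u = p * x * p" and x: "x \<in> corner_extension B C"
      by (auto simp: corner_def)
    show "u \<in> C"
      unfolding u
    proof (rule closed_cspan_sandwich_mem[OF closed_csubspace_if_cstar_subalg[OF C_sub(1)] _
          x[unfolded corner_extension_def]])
      fix y assume "y \<in> B \<union> {b * c * b' | b c b'. b \<in> B \<and> c \<in> C \<and> b' \<in> B}"
      then consider "y \<in> B" | b c b' where "y = b * c * b'" "b \<in> B" "c \<in> C" "b' \<in> B"
        by blast
      then show "p * y * p \<in> C"
      proof cases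
        case 1
        then show ?thesis
          using C_sub(2) corner_memI by blast
      next
        case (2 b c b')
        then have "c \<in> corner p A"
          using C_sub(3) by blast
        note c_fixed = corner_fixed(2,3)[OF p this]
        have "p * y * p = p * b * ((p * c) * p) * b' * p"
          unfolding c_fixed \<open>y = b * c * b'\<close> by (simp add: mult.assoc)
        also have "\<dots> = (p * b * p) * c * (p * b' * p)"
          by (simp add: mult.assoc)
        finally have "p * y * p = (p * b * p) * c * (p * b' * p)" .
        moreover have "p * b * p \<in> C" "p * b' * p \<in> C"
          using 2 C_sub(2) corner_memI by blast+
        ultimately show ?thesis
          using C_sub(1) \<open>c \<in> C\<close> by (simp add: cstar_subalg_def)
      qed
    qed
  qed
  show "C \<subseteq> corner p (corner_extension B C)"
  proof
    fix c assume "c \<in> C"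
    with \<open>1 \<in> B\<close> have "1 * c * 1 \<in> {b * c * b' | b c b'. b \<in> B \<and> c \<in> C \<and> b' \<in> B}"
      by blast
    then have "c \<in> corner_extension B C"
      using closed_cspan_superset unfolding corner_extension_def by fastforce
    then have "p * c * p \<in> corner p (corner_extension B C)"
      by (rule corner_memI)
    moreover have "c \<in> corner p A"
      using C_sub(3) \<open>c \<in> C\<close> by blast
    ultimately show "c \<in> corner p (corner_extension B C)"
      by (simp add: corner_fixed(1)[OF p])
  qed
qed

lemma corner_extension_corner:
  assumes B: "cstar_subalg B" and "1 \<in> B" and "p \<in> B" and full: "full_in p B"
    and D: "D \<in> intermediate B A"
  shows "corner_extension B (corner p D) = D"
proof
  let ?G = "{b * c * b' | b c b'. b \<in> B \<and> c \<in> corner p D \<and> b' \<in> B}"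
  let ?P = "{b * q * b' | b q b'. b \<in> B \<and> q \<in> {p} \<and> b' \<in> B}"
  have D_sub: "cstar_subalg D" "B \<subseteq> D"
    using D by (simp_all add: intermediate_def)
  have E: "closed_csubspace (corner_extension B (corner p D))"
    unfolding corner_extension_def by (rule closed_csubspace_closed_cspan)
  have "corner p D \<subseteq> D"
    using corner_subset[OF D_sub(1)] D_sub(2) \<open>p \<in> B\<close> by blast
  then have "b * c * b' \<in> D" if "b \<in> B" "c \<in> corner p D" "b' \<in> B" for b c b'
    using D_sub that by (blast intro: cstar_subalg_mult)
  then have "B \<union> ?G \<subseteq> D"
    using D_sub(2) by blast
  then show "corner_extension B (corner p D) \<subseteq> D"
    unfolding corner_extension_def
    using D_sub by (intro closed_cspan_minimal closed_csubspace_if_cstar_subalg)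
  show "D \<subseteq> corner_extension B (corner p D)"
  proof
    fix d assume "d \<in> D"
    have "g * d * y * 1 \<in> corner_extension B (corner p D)"
      if g: "g \<in> ?P" and y: "y \<in> closed_cspan ?P" for g y
    proof (rule closed_cspan_sandwich_mem[OF E _ y])
      fix z assume "z \<in> ?P"
      with g obtain b1 b2 b3 b4 where gz: "g = b1 * p * b2" "z = b3 * p * b4"
        and "b1 \<in> B" "b2 \<in> B" "b3 \<in> B" "b4 \<in> B"
        by blast
      have "b2 * d * b3 \<in> D"
        using D_sub \<open>d \<in> D\<close> \<open>b2 \<in> B\<close> \<open>b3 \<in> B\<close> by (blast intro: cstar_subalg_mult)
      then have "p * (b2 * d * b3) * p \<in> corner p D"
        by (rule corner_memI)
      with \<open>b1 \<in> B\<close> \<open>b4 \<in> B\<close> have "b1 * (p * (b2 * d * b3) * p) * b4 \<in> ?G"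
        by blast
      also have "b1 * (p * (b2 * d * b3) * p) * b4 = g * d * z * 1"
        unfolding gz by (simp add: mult.assoc)
      finally show "g * d * z * 1 \<in> corner_extension B (corner p D)"
        unfolding corner_extension_def by (intro subsetD[OF closed_cspan_superset] UnI2)
    qed
    then have "x * (d * y) \<in> corner_extension B (corner p D)"
      if x: "x \<in> closed_cspan ?P" and "y \<in> closed_cspan ?P" for x y
      using closed_cspan_sandwich_mem[OF E _ x, of 1 "d * y"] \<open>y \<in> closed_cspan ?P\<close>
      by (simp add: mult.assoc)
    moreover have "1 \<in> closed_cspan ?P"
      using ideal_span_full[OF B \<open>1 \<in> B\<close> \<open>p \<in> B\<close> full] \<open>1 \<in> B\<close>
      by (simp add: ideal_span_def)
    ultimately have "1 * (d * 1) \<in> corner_extension B (corner p D)"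
      by blast
    then show "d \<in> corner_extension B (corner p D)"
      by simp
  qed
qed

lemma cstar_irreducible_corner:
  assumes A: "cstar_subalg A" and B: "cstar_subalg B" "1 \<in> B" and "B \<subseteq> A"
    and p: "p \<in> B" "projection p" and "p \<noteq> 0" and irr: "cstar_irreducible B A"
  shows "cstar_irreducible (corner p B) (corner p A)"
  unfolding cstar_irreducible_def
proof
  fix C assume C: "C \<in> intermediate (corner p B) (corner p A)"
  let ?D = "corner_extension B C"
  have D: "?D \<in> intermediate B A"
    using corner_extension_intermediate[OF A B(1) \<open>B \<subseteq> A\<close> p C] .
  then have "cstar_subalg ?D" "1 \<in> ?D" "p \<in> ?D" "simple_cstar ?D"
    using B(2) p(1) irr by (auto simp: intermediate_def cstar_irreducible_def)
  then have "simple_cstar (corner p ?D)"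
    using simple_corner p(2) \<open>p \<noteq> 0\<close> by blast
  then show "simple_cstar C"
    using corner_corner_extension[OF B(2) p(2) C] by simp
qed

lemma cstar_irreducible_if_corner:
  assumes B: "cstar_subalg B" "1 \<in> B" and p: "p \<in> B" "projection p" and full: "full_in p B"
    and irr: "cstar_irreducible (corner p B) (corner p A)"
  shows "cstar_irreducible B A"
  unfolding cstar_irreducible_def
proof
  fix D assume D: "D \<in> intermediate B A"
  then have "cstar_subalg D" "1 \<in> D" "p \<in> D" "full_in p D"
    using full_in_mono[OF B p(1) _ full] B(2) p(1) by (auto simp: intermediate_def)
  moreover have "simple_cstar (corner p D)"
    using irr corner_intermediate[OF D p] by (simp add: cstar_irreducible_def)
  ultimately show "simple_cstar D"
    using simple_if_simple_corner p(2) by blast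
qed

lemma bij_betw_corner_intermediate:
  assumes A: "cstar_subalg A" and B: "cstar_subalg B" "1 \<in> B" and "B \<subseteq> A"
    and p: "p \<in> B" "projection p" and full: "full_in p B"
  shows "bij_betw (corner p) (intermediate B A) (intermediate (corner p B) (corner p A))"
proof (rule bij_betw_byWitness[where f' = "corner_extension B"])
  show "\<forall>D\<in>intermediate B A. corner_extension B (corner p D) = D"
    using corner_extension_corner[OF B p(1) full] by blast
  show "\<forall>C\<in>intermediate (corner p B) (corner p A). corner p (corner_extension B C) = C"
    using corner_corner_extension[OF B(2) p(2)] by blast
  show "corner p ` intermediate B A \<subseteq> intermediate (corner p B) (corner p A)"
    using corner_intermediate[OF _ p] by blast
  show "corner_extension B ` intermediate (corner p B) (corner p A) \<subseteq> intermediate B A"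
    using corner_extension_intermediate[OF A B(1) \<open>B \<subseteq> A\<close> p] by blast
qed

theorem lemma3p2:
  fixes A B :: "'a::cstar_algebra set" and p :: 'a
  assumes "cstar_subalg A" and "1 \<in> A"
    and "cstar_subalg B" and "1 \<in> B" and "B \<subseteq> A"
    and "p \<in> B" and "projection p"
  shows "(cstar_irreducible B A \<and> p \<noteq> 0 \<longrightarrow> cstar_irreducible (corner p B) (corner p A))
    \<and> (full_in p B \<and> cstar_irreducible (corner p B) (corner p A) \<longrightarrow>
        cstar_irreducible B A \<and>
        bij_betw (corner p) (intermediate B A) (intermediate (corner p B) (corner p A)))"
  using cstar_irreducible_corner[of A B p] cstar_irreducible_if_corner[of B p A]
    bij_betw_corner_intermediate[of A B p] assms
  by blast

end
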